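(* Let $\hbar\in\mathbb C\setminus\{0\}$, $p=2\hbar$, $0\le\ell\le n$. For generic $z=(z_1,\dots,z_n)$, the functions $W_M(\cdot\,;z)$, $M\subset\{1,\dots,n\}$, $\#M=\ell$, form a basis of $\overline{\mathcal F}_q^{\wedge\ell}(z)$.
   Context: A point $z$ is generic if $z_k-z_m+\hbar\notin p\mathbb Z$ for $k\ne m$ (equivalently, since $p=2\hbar$, $\prod_{k<m}(e^{2\pi iz_k/p}+e^{2\pi iz_m/p})\ne0$). For $f(t_1,\dots,t_\ell)$, $\mathrm{Asym}\,f=\sum_{\sigma\in S_\ell}\mathrm{sgn}(\sigma)f(t_{\sigma_1},\dots,t_{\sigma_\ell})$. With $E(t)=e^{2\pi it/p}$ and $M=\{m_1<\dots<m_\ell\}$: $G_M(t)=\prod_{a=1}^\ell\Big(\frac{1}{E(t_a-z_{m_a})-1}\prod_{1\le j<m_a}\frac{E(t_a-z_j)+1}{E(t_a-z_j)-1}\Big)$, $W_M=\mathrm{Asym}\,G_M$. $\overline{\mathcal F}_q^{\wedge\ell}(z)$ is the space of functions $F(t_1,\dots,t_\ell)$ such that $F\prod_{m=1}^n\prod_{a=1}^\ell(1-E(t_a-z_m))$ is an antisymmetric polynomial in $E(t_1),\dots,E(t_\ell)$ of degree less than $n$ in each variable. *)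

theory Defs
  imports "HOL-Analysis.Analysis" "HOL-Combinatorics.Permutations"
begin

text \<open>Variables t_1..t_l and z_1..z_n are encoded as functions nat => complex,
  using the indices 1..l resp. 1..n. The parameter hb is hbar, p = 2 hbar.\<close>

definition Efun :: "complex \<Rightarrow> complex \<Rightarrow> complex" where
  "Efun hb x = exp (2 * of_real pi * \<i> * x / (2 * hb))"

definition generic :: "complex \<Rightarrow> nat \<Rightarrow> (nat \<Rightarrow> complex) \<Rightarrow> bool" where
  "generic hb n z \<longleftrightarrow>
     (\<forall>k\<in>{1..n}. \<forall>m\<in>{1..n}. k \<noteq> m \<longrightarrow>
        \<not> (\<exists>j::int. z k - z m + hb = of_int j * (2 * hb)))"

definition Asym :: "nat \<Rightarrow> ((nat \<Rightarrow> complex) \<Rightarrow> complex) \<Rightarrow> (nat \<Rightarrow> complex) \<Rightarrow> complex" where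
  "Asym l f t = (\<Sum>\<sigma> | \<sigma> permutes {1..l}. of_int (sign \<sigma>) * f (t \<circ> \<sigma>))"

definition melem :: "nat set \<Rightarrow> nat \<Rightarrow> nat" where
  "melem M a = sorted_list_of_set M ! (a - 1)"

definition G_fun :: "complex \<Rightarrow> nat \<Rightarrow> (nat \<Rightarrow> complex) \<Rightarrow> nat set \<Rightarrow> (nat \<Rightarrow> complex) \<Rightarrow> complex" where
  "G_fun hb l z M t = (\<Prod>a\<in>{1..l}.
      (1 / (Efun hb (t a - z (melem M a)) - 1)) *
      (\<Prod>j\<in>{1..<melem M a}. (Efun hb (t a - z j) + 1) / (Efun hb (t a - z j) - 1)))"

definition W_fun :: "complex \<Rightarrow> nat \<Rightarrow> (nat \<Rightarrow> complex) \<Rightarrow> nat set \<Rightarrow> (nat \<Rightarrow> complex) \<Rightarrow> complex" where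
  "W_fun hb l z M = Asym l (G_fun hb l z M)"

definition regular_pts :: "complex \<Rightarrow> nat \<Rightarrow> nat \<Rightarrow> (nat \<Rightarrow> complex) \<Rightarrow> (nat \<Rightarrow> complex) set" where
  "regular_pts hb n l z = {t. \<forall>a\<in>{1..l}. \<forall>m\<in>{1..n}. Efun hb (t a - z m) \<noteq> 1}"

text \<open>Polynomial in x_1..x_l with degree < n in each variable, given by coefficients
  indexed by exponent vectors e with e a < n (a = 1..l).\<close>
definition poly_val :: "nat \<Rightarrow> nat \<Rightarrow> ((nat \<Rightarrow> nat) \<Rightarrow> complex) \<Rightarrow> (nat \<Rightarrow> complex) \<Rightarrow> complex" where
  "poly_val n l c x = (\<Sum>e\<in>PiE {1..l} (\<lambda>_. {..<n}). c e * (\<Prod>a\<in>{1..l}. x a ^ e a))"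

definition antisym_poly :: "nat \<Rightarrow> nat \<Rightarrow> ((nat \<Rightarrow> nat) \<Rightarrow> complex) \<Rightarrow> bool" where
  "antisym_poly n l c \<longleftrightarrow>
     (\<forall>\<sigma>. \<sigma> permutes {1..l} \<longrightarrow>
        (\<forall>x. poly_val n l c (x \<circ> \<sigma>) = of_int (sign \<sigma>) * poly_val n l c x))"

text \<open>The space bar F_q^{wedge l}(z). Functions are meromorphic, so they are considered
  on the regular points (off the poles); equality in the space is equality there.\<close>
definition Fspace :: "complex \<Rightarrow> nat \<Rightarrow> nat \<Rightarrow> (nat \<Rightarrow> complex) \<Rightarrow> ((nat \<Rightarrow> complex) \<Rightarrow> complex) set" where
  "Fspace hb n l z = {F. \<exists>c. antisym_poly n l c \<and>
      (\<forall>t\<in>regular_pts hb n l z.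
         F t * (\<Prod>m\<in>{1..n}. \<Prod>a\<in>{1..l}. (1 - Efun hb (t a - z m)))
           = poly_val n l c (\<lambda>a. Efun hb (t a)))}"

end

theory Submission
  imports Defs "HOL-Computational_Algebra.Polynomial"
begin

(* Put a_j = E(z_j) and x_a = E(t_a), so that E(t_a - z_j) = x_a / a_j. Multiplying the a-th factor
   of G_M by \<Prod>_j (1 - E(t_a - z_j)) leaves the polynomial
     p_m(x) = - \<Prod>_{j<m} (-1 - x/a_j) \<Prod>_{m<j\<le>n} (1 - x/a_j),   m = m_a,
   of degree < n, so W_M times the denominator of the space is the antisymmetrisation of
   \<Prod>_a p_{m_a}(x_a), and W_M lies in the space.
   Genericity says a_j + a_k \<noteq> 0. Hence p_m(a_k) = 0 for m < k while p_k(a_k) \<noteq> 0, so p_1, ..., p_n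
   is a basis of the polynomials of degree < n, and the antisymmetrised products with m_1 < ... < m_l
   form a basis of the antisymmetric polynomials of degree < n in each variable.
   The coordinates in the basis p are linear combinations of the values at nodes s_1, ..., s_n
   chosen away from the a_j, so the coefficients of a function of the space are determined by its
   values at regular points; this gives uniqueness. *)

definition wpoly :: "(nat \<Rightarrow> 'a::field) \<Rightarrow> nat \<Rightarrow> nat \<Rightarrow> 'a poly" where
  "wpoly a N m = smult (-1) ((\<Prod>j\<in>{1..<m}. [:-1, -inverse (a j):]) * (\<Prod>j\<in>{m<..N}. [:1, -inverse (a j):]))"

lemma poly_wpoly:
  "poly (wpoly a N m) x = - ((\<Prod>j\<in>{1..<m}. -1 - x / a j) * (\<Prod>j\<in>{m<..N}. 1 - x / a j))"
  unfolding wpoly_def by (simp add: poly_prod divide_inverse mult.commute)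

lemma degree_prod_linear_le: "finite A \<Longrightarrow> degree (\<Prod>j\<in>A. [:c j, d j:]) \<le> card A"
proof -
  assume "finite A"
  then have "degree (\<Prod>j\<in>A. [:c j, d j:]) \<le> sum (degree \<circ> (\<lambda>j. [:c j, d j:])) A"
    by (rule degree_prod_sum_le)
  also have "\<dots> \<le> (\<Sum>j\<in>A. 1)"
    by (intro sum_mono) (simp add: order.trans[OF degree_pCons_le])
  finally show ?thesis by simp
qed

lemma degree_wpoly_less:
  assumes "1 \<le> m" "m \<le> N"
  shows "degree (wpoly a N m) < N"
proof -
  have "degree (wpoly a N m) \<le> card {1..<m} + card {m<..N}"
    unfolding wpoly_def
    by (intro order.trans[OF degree_smult_le] order.trans[OF degree_mult_le] add_mono
        degree_prod_linear_le) simp_all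
  then show ?thesis using assms by simp
qed

lemma wpoly_Suc:
  assumes "m \<le> N"
  shows "wpoly a (Suc N) m = wpoly a N m * [:1, -inverse (a (Suc N)):]"
proof -
  have "{m<..Suc N} = insert (Suc N) {m<..N}" using assms by auto
  then have "(\<Prod>j\<in>{m<..Suc N}. [:1, -inverse (a j):])
      = [:1, -inverse (a (Suc N)):] * (\<Prod>j\<in>{m<..N}. [:1, -inverse (a j):])"
    by simp
  then show ?thesis unfolding wpoly_def by (simp only: mult_smult_left mult_smult_right ac_simps)
qed

lemma nonzero_if_pairwise_sums_nonzero:
  fixes a :: "nat \<Rightarrow> 'a::field_char_0"
  assumes "\<forall>j\<in>S. \<forall>k\<in>S. a j + a k \<noteq> 0" "j \<in> S"
  shows "a j \<noteq> 0"
  using assms by fastforce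

lemma poly_wpoly_diag_nonzero:
  fixes a :: "nat \<Rightarrow> 'a::field_char_0"
  assumes "\<forall>j\<in>{1..N}. \<forall>k\<in>{1..N}. a j + a k \<noteq> 0"
  shows "poly (wpoly a N N) (a N) \<noteq> 0"
proof -
  have "-1 - a N / a j \<noteq> 0" if "j \<in> {1..<N}" for j
  proof -
    have "a j \<noteq> 0" "a j + a N \<noteq> 0"
      using that nonzero_if_pairwise_sums_nonzero[OF assms] assms by auto
    moreover from \<open>a j \<noteq> 0\<close> have "-1 - a N / a j = - (a j + a N) / a j"
      by (simp add: field_simps)
    ultimately show ?thesis by (metis divide_eq_0_iff neg_equal_0_iff_equal)
  qed
  then show ?thesis by (simp add: poly_wpoly)
qed

lemma linear_times_wpoly_sum:
  assumes "a (Suc N) \<noteq> 0"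
  shows "[:- a (Suc N), 1:] * (\<Sum>m\<in>{1..N}. smult (\<beta> m) (wpoly a N m)) =
    (\<Sum>m\<in>{1..N}. smult (- a (Suc N) * \<beta> m) (wpoly a (Suc N) m))"
  unfolding sum_distrib_left
proof (intro sum.cong refl)
  fix m assume "m \<in> {1..N}"
  have "smult (- a (Suc N)) [:1, -inverse (a (Suc N)):] = [:- a (Suc N), 1:]"
    using assms by simp
  then have "[:- a (Suc N), 1:] * wpoly a N m = smult (- a (Suc N)) (wpoly a (Suc N) m)"
    using \<open>m \<in> {1..N}\<close>
    by (simp only: wpoly_Suc mult_smult_right[symmetric] mult.commute atLeastAtMost_iff)
  then show "[:- a (Suc N), 1:] * smult (\<beta> m) (wpoly a N m) =
      smult (- a (Suc N) * \<beta> m) (wpoly a (Suc N) m)"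
    by (simp only: mult_smult_right smult_smult mult.commute[of "\<beta> m"])
qed

lemma wpoly_span:
  fixes a :: "nat \<Rightarrow> 'a::field_char_0"
  assumes "\<forall>j\<in>{1..N}. \<forall>k\<in>{1..N}. a j + a k \<noteq> 0" and "degree f < N"
  shows "\<exists>\<beta>. f = (\<Sum>m\<in>{1..N}. smult (\<beta> m) (wpoly a N m))"
  using assms
proof (induction N arbitrary: f)
  case 0
  then show ?case by simp
next
  case (Suc N)
  define A where "A = a (Suc N)"
  define P where "P = wpoly a (Suc N) (Suc N)"
  define c where "c = poly f A / poly P A"
  have A0: "A \<noteq> 0"
    unfolding A_def by (rule nonzero_if_pairwise_sums_nonzero[OF Suc.prems(1)]) simp
  have "poly (f - smult c P) A = 0"
    using poly_wpoly_diag_nonzero[OF Suc.prems(1)] unfolding c_def P_def A_def by simp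
  then obtain g where g: "f - smult c P = [:-A, 1:] * g"
    by (metis dvdE poly_eq_0_iff_dvd)
  have "\<exists>\<beta>. g = (\<Sum>m\<in>{1..N}. smult (\<beta> m) (wpoly a N m))"
  proof (cases "g = 0")
    case True
    then show ?thesis by (intro exI[of _ "\<lambda>_. 0"]) simp
  next
    case False
    have "degree (f - smult c P) < Suc N"
      using Suc.prems(2) degree_wpoly_less[of "Suc N" "Suc N" a]
      unfolding P_def by (intro degree_diff_less order.strict_trans1[OF degree_smult_le]) auto
    moreover have "degree ([:-A, 1:] * g) = Suc (degree g)"
      using False by (subst degree_mult_eq) auto
    ultimately have "degree g < N" unfolding g by simp
    then show ?thesis using Suc.IH Suc.prems(1) by simp
  qed
  then obtain \<beta> where \<beta>: "g = (\<Sum>m\<in>{1..N}. smult (\<beta> m) (wpoly a N m))" by blast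
  have "[:-A, 1:] * g = (\<Sum>m\<in>{1..N}. smult (- A * \<beta> m) (wpoly a (Suc N) m))"
    unfolding \<beta> A_def by (rule linear_times_wpoly_sum) (use A0 in \<open>simp add: A_def\<close>)
  moreover define \<beta>' where "\<beta>' m = (if m = Suc N then c else - A * \<beta> m)" for m
  ultimately have "f = (\<Sum>m\<in>{1..Suc N}. smult (\<beta>' m) (wpoly a (Suc N) m))"
    using g unfolding P_def by (simp add: algebra_simps)
  then show ?case by blast
qed

lemma wpoly_sum_Suc:
  "(\<Sum>m\<in>{1..Suc N}. smult (\<beta> m) (wpoly a (Suc N) m)) =
    smult (\<beta> (Suc N)) (wpoly a (Suc N) (Suc N)) +
    (\<Sum>m\<in>{1..N}. smult (\<beta> m) (wpoly a N m)) * [:1, -inverse (a (Suc N)):]"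
proof -
  have "(\<Sum>m\<in>{1..N}. smult (\<beta> m) (wpoly a (Suc N) m))
      = (\<Sum>m\<in>{1..N}. smult (\<beta> m) (wpoly a N m)) * [:1, -inverse (a (Suc N)):]"
    unfolding sum_distrib_right
    by (intro sum.cong refl) (simp only: atLeastAtMost_iff wpoly_Suc mult_smult_left)
  then show ?thesis by (simp add: add.commute)
qed

lemma wpoly_independent:
  fixes a :: "nat \<Rightarrow> 'a::field_char_0"
  assumes "\<forall>j\<in>{1..N}. \<forall>k\<in>{1..N}. a j + a k \<noteq> 0"
    and "(\<Sum>m\<in>{1..N}. smult (\<beta> m) (wpoly a N m)) = 0"
  shows "\<forall>m\<in>{1..N}. \<beta> m = 0"
  using assms
proof (induction N arbitrary: \<beta>)
  case 0
  then show ?case by simp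
next
  case (Suc N)
  define A where "A = a (Suc N)"
  have A0: "A \<noteq> 0"
    unfolding A_def by (rule nonzero_if_pairwise_sums_nonzero[OF Suc.prems(1)]) simp
  note split = wpoly_sum_Suc[of \<beta> a N, folded A_def]
  have "poly [:1, -inverse A:] A = 0" using A0 by simp
  moreover have "poly (smult (\<beta> (Suc N)) (wpoly a (Suc N) (Suc N)) +
      (\<Sum>m\<in>{1..N}. smult (\<beta> m) (wpoly a N m)) * [:1, -inverse A:]) A = 0"
    unfolding split[symmetric] Suc.prems(2) by simp
  ultimately have "\<beta> (Suc N) * poly (wpoly a (Suc N) (Suc N)) A = 0"
    by (simp only: poly_add poly_smult poly_mult mult_zero_right add_0_right)
  then have top: "\<beta> (Suc N) = 0"
    using poly_wpoly_diag_nonzero[OF Suc.prems(1)] unfolding A_def by simp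
  then have "(\<Sum>m\<in>{1..N}. smult (\<beta> m) (wpoly a N m)) * [:1, -inverse A:] = 0"
    using Suc.prems(2) unfolding split by simp
  moreover have "[:1, -inverse A:] \<noteq> 0" by simp
  ultimately have "(\<Sum>m\<in>{1..N}. smult (\<beta> m) (wpoly a N m)) = 0"
    using mult_eq_0_iff by blast
  then have "\<forall>m\<in>{1..N}. \<beta> m = 0" using Suc.IH Suc.prems(1) by simp
  with top show ?case by (auto simp: le_Suc_eq)
qed

definition lagrange_basis :: "(nat \<Rightarrow> 'a::field) \<Rightarrow> nat \<Rightarrow> nat \<Rightarrow> 'a poly" where
  "lagrange_basis s N i =
     smult (inverse (\<Prod>k\<in>{1..N}-{i}. s i - s k)) (\<Prod>k\<in>{1..N}-{i}. [:-s k, 1:])"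

lemma degree_lagrange_basis_less:
  assumes "i \<in> {1..N}"
  shows "degree (lagrange_basis s N i) < N"
proof -
  have "degree (lagrange_basis s N i) \<le> card ({1..N} - {i})"
    unfolding lagrange_basis_def
    by (intro order.trans[OF degree_smult_le] degree_prod_linear_le) simp
  then show ?thesis using assms by auto
qed

lemma poly_lagrange_basis:
  assumes "inj_on s {1..N}" "i \<in> {1..N}" "j \<in> {1..N}"
  shows "poly (lagrange_basis s N i) (s j) = (if i = j then 1 else 0)"
proof -
  have "s i - s k \<noteq> 0" if "k \<in> {1..N} - {i}" for k
    using assms that by (auto dest: inj_onD)
  then have "(\<Prod>k\<in>{1..N}-{i}. s i - s k) \<noteq> 0" by simp
  then show ?thesis using assms(3)
    by (auto simp: lagrange_basis_def poly_prod)
qed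

lemma lagrange_interpolation:
  assumes "inj_on s {1..N}" "degree f < N"
  shows "f = (\<Sum>i\<in>{1..N}. smult (poly f (s i)) (lagrange_basis s N i))"
proof (rule poly_eqI_degree)
  show "poly f x = poly (\<Sum>i\<in>{1..N}. smult (poly f (s i)) (lagrange_basis s N i)) x"
    if "x \<in> s ` {1..N}" for x
  proof -
    obtain j where j: "j \<in> {1..N}" "x = s j" using \<open>x \<in> s ` {1..N}\<close> by blast
    have "poly (\<Sum>i\<in>{1..N}. smult (poly f (s i)) (lagrange_basis s N i)) x
        = (\<Sum>i\<in>{1..N}. if i = j then poly f (s i) else 0)"
      unfolding poly_sum j(2) by (intro sum.cong refl) (simp add: poly_lagrange_basis[OF assms(1) _ j(1)])
    then show ?thesis using j by simp
  qed
  show "degree f < card (s ` {1..N})" using assms by (simp add: card_image)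
  have "degree (\<Sum>i\<in>{1..N}. smult (poly f (s i)) (lagrange_basis s N i)) < N"
    using assms(2) by (intro degree_sum_less order.strict_trans1[OF degree_smult_le]
        degree_lagrange_basis_less) auto
  then show "degree (\<Sum>i\<in>{1..N}. smult (poly f (s i)) (lagrange_basis s N i)) < card (s ` {1..N})"
    using assms(1) by (simp add: card_image)
qed

lemma smult_sum_right: "smult c (\<Sum>i\<in>S. f i) = (\<Sum>i\<in>S. smult c (f i))"
  by (induction S rule: infinite_finite_induct) (auto simp: smult_add_right)

locale sampled_basis =
  fixes n :: nat and p :: "nat \<Rightarrow> 'a::field poly" and s :: "nat \<Rightarrow> 'a" and \<mu> :: "nat \<Rightarrow> nat \<Rightarrow> 'a"
  assumes degree_basis_less: "m \<in> {1..n} \<Longrightarrow> degree (p m) < n"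
    and basis_expansion:
      "degree f < n \<Longrightarrow> f = (\<Sum>m\<in>{1..n}. smult (\<Sum>i\<in>{1..n}. \<mu> m i * poly f (s i)) (p m))"
    and biorthogonal: "k \<in> {1..n} \<Longrightarrow> m \<in> {1..n} \<Longrightarrow>
      (\<Sum>i\<in>{1..n}. \<mu> k i * poly (p m) (s i)) = (if k = m then 1 else 0)"

lemma wpoly_sampled_basis:
  fixes a s :: "nat \<Rightarrow> 'a::field_char_0"
  assumes gen: "\<forall>j\<in>{1..n}. \<forall>k\<in>{1..n}. a j + a k \<noteq> 0" and inj: "inj_on s {1..n}"
  obtains \<mu> where "sampled_basis n (wpoly a n) s \<mu>"
proof -
  have "\<exists>\<beta>. lagrange_basis s n i = (\<Sum>m\<in>{1..n}. smult (\<beta> m) (wpoly a n m))" if "i \<in> {1..n}" for i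
    using wpoly_span[OF gen degree_lagrange_basis_less[OF that]] .
  then obtain \<beta> where \<beta>: "\<And>i. i \<in> {1..n} \<Longrightarrow>
      lagrange_basis s n i = (\<Sum>m\<in>{1..n}. smult (\<beta> i m) (wpoly a n m))"
    by metis
  define \<mu> where "\<mu> m i = \<beta> i m" for m i
  have expansion: "f = (\<Sum>m\<in>{1..n}. smult (\<Sum>i\<in>{1..n}. \<mu> m i * poly f (s i)) (wpoly a n m))"
    if "degree f < n" for f
  proof -
    have "f = (\<Sum>i\<in>{1..n}. smult (poly f (s i)) (lagrange_basis s n i))"
      by (rule lagrange_interpolation[OF inj that])
    also have "\<dots> = (\<Sum>i\<in>{1..n}. \<Sum>m\<in>{1..n}. smult (\<mu> m i * poly f (s i)) (wpoly a n m))"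
      by (intro sum.cong refl) (simp add: \<beta> \<mu>_def smult_sum_right mult.commute)
    also have "\<dots> = (\<Sum>m\<in>{1..n}. smult (\<Sum>i\<in>{1..n}. \<mu> m i * poly f (s i)) (wpoly a n m))"
      by (subst sum.swap) (simp add: smult_sum)
    finally show ?thesis .
  qed
  have "(\<Sum>i\<in>{1..n}. \<mu> k i * poly (wpoly a n m) (s i)) = (if k = m then 1 else 0)"
    if k: "k \<in> {1..n}" and m: "m \<in> {1..n}" for k m
  proof -
    define \<gamma> where "\<gamma> k = (\<Sum>i\<in>{1..n}. \<mu> k i * poly (wpoly a n m) (s i)) - (if k = m then 1 else 0)" for k
    have "(\<Sum>k\<in>{1..n}. smult (if k = m then 1 else 0) (wpoly a n k)) = wpoly a n m"
      using m by (simp add: if_distrib[of "\<lambda>c. smult c _"] cong: if_cong)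
    moreover have "degree (wpoly a n m) < n" using m by (intro degree_wpoly_less) auto
    ultimately have "(\<Sum>k\<in>{1..n}. smult (\<gamma> k) (wpoly a n k)) = 0"
      unfolding \<gamma>_def smult_diff_left sum_subtractf using expansion by simp
    then have "\<forall>k\<in>{1..n}. \<gamma> k = 0" by (rule wpoly_independent[OF gen])
    then show ?thesis using k unfolding \<gamma>_def by simp
  qed
  with expansion have "sampled_basis n (wpoly a n) s \<mu>"
    by unfold_locales (auto intro: degree_wpoly_less)
  then show ?thesis by (rule that)
qed

definition antisymmetric :: "nat \<Rightarrow> ((nat \<Rightarrow> complex) \<Rightarrow> complex) \<Rightarrow> bool" where
  "antisymmetric l h \<longleftrightarrow> (\<forall>\<sigma> x. \<sigma> permutes {1..l} \<longrightarrow> h (x \<circ> \<sigma>) = of_int (sign \<sigma>) * h x)"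

lemma antisym_poly_iff: "antisym_poly n l c \<longleftrightarrow> antisymmetric l (poly_val n l c)"
  unfolding antisym_poly_def antisymmetric_def by blast

lemma antisymmetric_Asym: "antisymmetric l (Asym l f)"
  unfolding antisymmetric_def
proof (intro allI impI)
  fix \<sigma> t assume \<sigma>: "\<sigma> permutes {1..l}"
  have sign_comp: "sign (\<sigma> \<circ> \<rho>) = sign \<sigma> * sign \<rho>" if "\<rho> permutes {1..l}" for \<rho>
    using \<sigma> that by (meson finite_atLeastAtMost permutation_permutes sign_compose)
  have "Asym l f t = (\<Sum>\<rho> | \<rho> permutes {1..l}. of_int (sign (\<sigma> \<circ> \<rho>)) * f (t \<circ> (\<sigma> \<circ> \<rho>)))"
    unfolding Asym_def by (rule setum_permutations_compose_left[OF \<sigma>])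
  also have "\<dots> = of_int (sign \<sigma>) * Asym l f (t \<circ> \<sigma>)"
    unfolding Asym_def sum_distrib_left by (intro sum.cong refl) (simp add: sign_comp o_assoc)
  finally have "of_int (sign \<sigma>) * Asym l f t = of_int (sign \<sigma> * sign \<sigma>) * Asym l f (t \<circ> \<sigma>)"
    by (simp only: of_int_mult mult.assoc)
  then show "Asym l f (t \<circ> \<sigma>) = of_int (sign \<sigma>) * Asym l f t"
    by (simp add: sign_idempotent)
qed

lemma Asym_prod:
  "Asym l (\<lambda>y. \<Prod>b\<in>{1..l}. g b (y b)) x =
     (\<Sum>\<sigma> | \<sigma> permutes {1..l}. of_int (sign \<sigma>) * (\<Prod>b\<in>{1..l}. g (inv \<sigma> b) (x b)))"
  unfolding Asym_def
proof (intro sum.cong refl)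
  fix \<sigma> assume "\<sigma> \<in> {\<sigma>. \<sigma> permutes {1..l}}"
  then have \<sigma>: "\<sigma> permutes {1..l}" by simp
  have "(\<Prod>b\<in>{1..l}. g (inv \<sigma> b) (x b)) = (\<Prod>b\<in>{1..l}. g b (x (\<sigma> b)))"
    using prod.permute[OF \<sigma>, of "\<lambda>b. g (inv \<sigma> b) (x b)"]
    by (simp add: permutes_inverses[OF \<sigma>])
  then show "of_int (sign \<sigma>) * (\<Prod>b\<in>{1..l}. g b ((x \<circ> \<sigma>) b)) =
      of_int (sign \<sigma>) * (\<Prod>b\<in>{1..l}. g (inv \<sigma> b) (x b))"
    by simp
qed

definition polyfun :: "nat \<Rightarrow> nat \<Rightarrow> ((nat \<Rightarrow> complex) \<Rightarrow> complex) \<Rightarrow> bool" where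
  "polyfun n l h \<longleftrightarrow> (\<exists>c. h = poly_val n l c)"

lemma poly_eq_sum_lessThan:
  fixes p :: "'a::comm_semiring_1 poly"
  assumes "degree p < n"
  shows "poly p y = (\<Sum>k<n. coeff p k * y ^ k)"
proof -
  have "poly p y = (\<Sum>k\<le>degree p. coeff p k * y ^ k)" by (rule poly_altdef)
  also have "\<dots> = (\<Sum>k<n. coeff p k * y ^ k)"
    by (rule sum.mono_neutral_left) (use assms in \<open>auto simp: coeff_eq_0\<close>)
  finally show ?thesis .
qed

lemma polyfun_prod:
  assumes "\<forall>b\<in>{1..l}. degree (q b) < n"
  shows "polyfun n l (\<lambda>x. \<Prod>b\<in>{1..l}. poly (q b) (x b))"
proof -
  have "(\<Prod>b\<in>{1..l}. poly (q b) (x b)) = poly_val n l (\<lambda>e. \<Prod>b\<in>{1..l}. coeff (q b) (e b)) x" for x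
  proof -
    have "(\<Prod>b\<in>{1..l}. poly (q b) (x b)) = (\<Prod>b\<in>{1..l}. \<Sum>k<n. coeff (q b) k * x b ^ k)"
      using assms by (intro prod.cong refl poly_eq_sum_lessThan) auto
    also have "\<dots> = (\<Sum>e\<in>PiE {1..l} (\<lambda>_. {..<n}). \<Prod>b\<in>{1..l}. coeff (q b) (e b) * x b ^ e b)"
      by (rule prod_sum_PiE) auto
    finally show ?thesis unfolding poly_val_def by (simp add: prod.distrib)
  qed
  then show ?thesis unfolding polyfun_def by blast
qed

lemma polyfun_lincomb:
  assumes "finite A" "\<forall>M\<in>A. polyfun n l (f M)"
  shows "polyfun n l (\<lambda>x. \<Sum>M\<in>A. d M * f M x)"
proof -
  from assms(2) obtain c where "\<forall>M\<in>A. f M = poly_val n l (c M)"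
    unfolding polyfun_def by metis
  then have "(\<lambda>x. \<Sum>M\<in>A. d M * f M x) = poly_val n l (\<lambda>e. \<Sum>M\<in>A. d M * c M e)"
    by (intro ext) (simp add: poly_val_def sum_distrib_left sum_distrib_right mult_ac sum.swap[of _ A])
  then show ?thesis unfolding polyfun_def by blast
qed

lemma polyfun_diff:
  assumes "polyfun n l f" "polyfun n l g"
  shows "polyfun n l (\<lambda>x. f x - g x)"
proof -
  from assms obtain c d where "f = poly_val n l c" "g = poly_val n l d"
    unfolding polyfun_def by blast
  then have "(\<lambda>x. f x - g x) = poly_val n l (\<lambda>e. c e - d e)"
    by (intro ext) (simp add: poly_val_def algebra_simps sum_subtractf)
  then show ?thesis unfolding polyfun_def by blast
qed

lemma polyfun_Asym_prod:
  assumes "\<forall>b\<in>{1..l}. degree (q b) < n"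
  shows "polyfun n l (Asym l (\<lambda>y. \<Prod>b\<in>{1..l}. poly (q b) (y b)))"
proof -
  have "polyfun n l (\<lambda>x. \<Prod>b\<in>{1..l}. poly (q (inv \<sigma> b)) (x b))" if "\<sigma> permutes {1..l}" for \<sigma>
    using assms permutes_in_image[OF permutes_inv[OF that]] by (intro polyfun_prod) auto
  then have "polyfun n l (\<lambda>x. \<Sum>\<sigma> | \<sigma> permutes {1..l}.
      of_int (sign \<sigma>) * (\<Prod>b\<in>{1..l}. poly (q (inv \<sigma> b)) (x b)))"
    by (intro polyfun_lincomb) (simp_all add: finite_permutations)
  moreover have "Asym l (\<lambda>y. \<Prod>b\<in>{1..l}. poly (q b) (y b)) = (\<lambda>x. \<Sum>\<sigma> | \<sigma> permutes {1..l}.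
      of_int (sign \<sigma>) * (\<Prod>b\<in>{1..l}. poly (q (inv \<sigma> b)) (x b)))"
    by (rule ext) (rule Asym_prod)
  ultimately show ?thesis by simp
qed

lemma bij_betw_melem:
  assumes "finite M" "card M = l"
  shows "bij_betw (melem M) {1..l} M"
proof -
  have "bij_betw ((!) (sorted_list_of_set M)) {..<l} M"
    by (rule bij_betw_nth) (use assms in auto)
  moreover have "bij_betw (\<lambda>a. a - 1) {1..l} {..<l}"
    by (rule bij_betw_byWitness[where f' = "\<lambda>a. a + 1"]) auto
  ultimately show ?thesis
    unfolding melem_def using bij_betw_trans by (fastforce simp: o_def)
qed

lemma melem_in: "finite M \<Longrightarrow> card M = l \<Longrightarrow> b \<in> {1..l} \<Longrightarrow> melem M b \<in> M"
  using bij_betw_apply[OF bij_betw_melem] by blast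

lemma melem_eq_comp_permutes:
  assumes "finite K" "card K = l" "finite M" "card M = l" and \<sigma>: "\<sigma> permutes {1..l}"
    and eq: "\<forall>b\<in>{1..l}. melem K b = melem M (inv \<sigma> b)"
  shows "K = M \<and> \<sigma> = id"
proof -
  have bK: "bij_betw (melem K) {1..l} K" and bM: "bij_betw (melem M) {1..l} M"
    using assms bij_betw_melem by blast+
  have \<sigma>': "inv \<sigma> permutes {1..l}" by (rule permutes_inv[OF \<sigma>])
  have "K = melem K ` {1..l}" using bK by (simp add: bij_betw_def)
  also have "\<dots> = melem M ` (inv \<sigma> ` {1..l})" using eq by (auto simp: image_iff)
  also have "\<dots> = M" using bM permutes_image[OF \<sigma>'] by (simp add: bij_betw_def)
  finally have "K = M" .
  have "inv \<sigma> b = b" if b: "b \<in> {1..l}" for b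
  proof -
    have "melem M b = melem M (inv \<sigma> b)" using eq \<open>K = M\<close> b by simp
    moreover have "inv \<sigma> b \<in> {1..l}" using permutes_in_image[OF \<sigma>'] b by simp
    ultimately show ?thesis using bM b unfolding bij_betw_def inj_on_def by metis
  qed
  then have "\<sigma> b = b" for b
    using permutes_inverses(1)[OF \<sigma>, of b] permutes_not_in[OF \<sigma>] by (cases "b \<in> {1..l}") auto
  with \<open>K = M\<close> show ?thesis by auto
qed

lemma inj_on_eq_melem_comp_permutes:
  assumes "inj_on g {1..l}"
  obtains \<sigma> where "\<sigma> permutes {1..l}" "\<forall>b\<in>{1..l}. g b = melem (g ` {1..l}) (\<sigma> b)"
proof -
  define K where "K = g ` {1..l}"
  have bK: "bij_betw (melem K) {1..l} K"
    unfolding K_def using assms by (intro bij_betw_melem) (auto simp: card_image)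
  have bg: "bij_betw g {1..l} K" unfolding K_def using assms by (simp add: bij_betw_def)
  define \<sigma> where "\<sigma> b = (if b \<in> {1..l} then the_inv_into {1..l} (melem K) (g b) else b)" for b
  have "bij_betw (the_inv_into {1..l} (melem K) \<circ> g) {1..l} {1..l}"
    by (rule bij_betw_trans[OF bg bij_betw_the_inv_into[OF bK]])
  moreover have "bij_betw \<sigma> {1..l} {1..l} = bij_betw (the_inv_into {1..l} (melem K) \<circ> g) {1..l} {1..l}"
    by (rule bij_betw_cong) (simp add: \<sigma>_def)
  ultimately have "bij_betw \<sigma> {1..l} {1..l}" by simp
  then have "\<sigma> permutes {1..l}" by (rule bij_imp_permutes) (auto simp: \<sigma>_def)
  moreover have "\<forall>b\<in>{1..l}. g b = melem K (\<sigma> b)"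
    using bij_betw_apply[OF bg] bK by (simp add: \<sigma>_def f_the_inv_into_f_bij_betw)
  ultimately show ?thesis using that unfolding K_def by blast
qed

lemma sum_PiE_comp_permutes:
  assumes \<sigma>: "\<sigma> permutes {1..l}"
  shows "(\<Sum>i\<in>PiE {1..l} (\<lambda>_. B). F i) = (\<Sum>i\<in>PiE {1..l} (\<lambda>_. B). F (i \<circ> \<sigma>))"
proof -
  let ?P = "PiE {1..l} (\<lambda>_. B)"
  have comp_in: "i \<circ> \<tau> \<in> ?P" if "\<tau> permutes {1..l}" "i \<in> ?P" for i \<tau>
    using that permutes_in_image[OF that(1)] permutes_not_in[OF that(1)]
    by (auto simp: PiE_iff extensional_def)
  have "bij_betw (\<lambda>i. i \<circ> \<sigma>) ?P ?P"
  proof (rule bij_betw_byWitness[where f' = "\<lambda>i. i \<circ> inv \<sigma>"])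
    show "\<forall>i\<in>?P. i \<circ> \<sigma> \<circ> inv \<sigma> = i" "\<forall>i\<in>?P. i \<circ> inv \<sigma> \<circ> \<sigma> = i"
      using permutes_inv_o[OF \<sigma>] by (simp_all add: o_assoc[symmetric])
    show "(\<lambda>i. i \<circ> \<sigma>) ` ?P \<subseteq> ?P" "(\<lambda>i. i \<circ> inv \<sigma>) ` ?P \<subseteq> ?P"
      using comp_in \<sigma> permutes_inv[OF \<sigma>] by auto
  qed
  then show ?thesis by (rule sum.reindex_bij_betw[symmetric])
qed

definition wedge :: "(nat \<Rightarrow> complex poly) \<Rightarrow> nat \<Rightarrow> nat set \<Rightarrow> (nat \<Rightarrow> complex) \<Rightarrow> complex" where
  "wedge p l M = Asym l (\<lambda>x. \<Prod>b\<in>{1..l}. poly (p (melem M b)) (x b))"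

lemma antisymmetric_wedge: "antisymmetric l (wedge p l M)"
  unfolding wedge_def by (rule antisymmetric_Asym)

lemma polyfun_wedge: "(\<And>b. b \<in> {1..l} \<Longrightarrow> degree (p (melem M b)) < n) \<Longrightarrow> polyfun n l (wedge p l M)"
  unfolding wedge_def by (intro polyfun_Asym_prod) auto

locale sampled_tensor_basis = sampled_basis n p s \<mu>
  for n :: nat and p :: "nat \<Rightarrow> complex poly" and s \<mu> +
  fixes l :: nat
begin

definition coord :: "nat \<Rightarrow> complex poly \<Rightarrow> complex" where
  "coord m f = (\<Sum>i\<in>{1..n}. \<mu> m i * poly f (s i))"

definition tensor_coord :: "(nat \<Rightarrow> nat) \<Rightarrow> ((nat \<Rightarrow> complex) \<Rightarrow> complex) \<Rightarrow> complex" where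
  "tensor_coord g h = (\<Sum>i\<in>PiE {1..l} (\<lambda>_. {1..n}). (\<Prod>b\<in>{1..l}. \<mu> (g b) (i b)) * h (s \<circ> i))"

definition index_sets :: "nat set set" where
  "index_sets = {M. M \<subseteq> {1..n} \<and> card M = l}"

lemma poly_coord_expansion: "degree f < n \<Longrightarrow> poly f y = (\<Sum>m\<in>{1..n}. coord m f * poly (p m) y)"
  using arg_cong[OF basis_expansion, of f "\<lambda>q. poly q y"] by (simp add: poly_sum coord_def)

lemma tensor_coord_lincomb:
  "finite A \<Longrightarrow> tensor_coord g (\<lambda>x. \<Sum>M\<in>A. d M * f M x) = (\<Sum>M\<in>A. d M * tensor_coord g (f M))"
  unfolding tensor_coord_def by (simp add: sum_distrib_left sum_distrib_right mult_ac sum.swap[of _ A])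

lemma tensor_coord_diff: "tensor_coord g (\<lambda>x. f x - f' x) = tensor_coord g f - tensor_coord g f'"
  unfolding tensor_coord_def by (simp add: algebra_simps sum_subtractf)

lemma tensor_coord_prod:
  "tensor_coord g (\<lambda>x. \<Prod>b\<in>{1..l}. poly (q b) (x b)) = (\<Prod>b\<in>{1..l}. coord (g b) (q b))"
proof -
  have "tensor_coord g (\<lambda>x. \<Prod>b\<in>{1..l}. poly (q b) (x b)) =
      (\<Sum>i\<in>PiE {1..l} (\<lambda>_. {1..n}). \<Prod>b\<in>{1..l}. \<mu> (g b) (i b) * poly (q b) (s (i b)))"
    unfolding tensor_coord_def by (simp add: prod.distrib)
  also have "\<dots> = (\<Prod>b\<in>{1..l}. coord (g b) (q b))"
    unfolding coord_def by (rule prod_sum_PiE[symmetric]) auto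
  finally show ?thesis .
qed

lemma tensor_coord_cong: "\<forall>b\<in>{1..l}. g b = g' b \<Longrightarrow> tensor_coord g h = tensor_coord g' h"
  unfolding tensor_coord_def by (intro sum.cong refl arg_cong2[where f = "(*)"] prod.cong) auto

lemma tensor_coord_comp_permutes:
  assumes "antisymmetric l h" and \<sigma>: "\<sigma> permutes {1..l}"
  shows "tensor_coord (g \<circ> \<sigma>) h = of_int (sign \<sigma>) * tensor_coord g h"
proof -
  have "tensor_coord (g \<circ> \<sigma>) h = (\<Sum>i\<in>PiE {1..l} (\<lambda>_. {1..n}).
      (\<Prod>b\<in>{1..l}. \<mu> (g (\<sigma> b)) (i (\<sigma> b))) * h (s \<circ> i \<circ> \<sigma>))"
    unfolding tensor_coord_def by (subst sum_PiE_comp_permutes[OF \<sigma>]) (simp add: o_assoc)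
  also have "\<dots> = (\<Sum>i\<in>PiE {1..l} (\<lambda>_. {1..n}).
      of_int (sign \<sigma>) * ((\<Prod>b\<in>{1..l}. \<mu> (g b) (i b)) * h (s \<circ> i)))"
  proof (intro sum.cong refl)
    fix i
    have "(\<Prod>b\<in>{1..l}. \<mu> (g (\<sigma> b)) (i (\<sigma> b))) = (\<Prod>b\<in>{1..l}. \<mu> (g b) (i b))"
      using prod.permute[OF \<sigma>, of "\<lambda>b. \<mu> (g b) (i b)"] by (simp add: o_def)
    moreover have "h (s \<circ> i \<circ> \<sigma>) = of_int (sign \<sigma>) * h (s \<circ> i)"
      using assms unfolding antisymmetric_def by blast
    ultimately show "(\<Prod>b\<in>{1..l}. \<mu> (g (\<sigma> b)) (i (\<sigma> b))) * h (s \<circ> i \<circ> \<sigma>) =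
        of_int (sign \<sigma>) * ((\<Prod>b\<in>{1..l}. \<mu> (g b) (i b)) * h (s \<circ> i))"
      by simp
  qed
  finally show ?thesis unfolding tensor_coord_def sum_distrib_left .
qed

lemma tensor_coord_non_inj:
  assumes "antisymmetric l h"
    and "b1 \<in> {1..l}" "b2 \<in> {1..l}" "b1 \<noteq> b2" "g b1 = g b2"
  shows "tensor_coord g h = 0"
proof -
  let ?\<tau> = "Transposition.transpose b1 b2"
  have \<tau>: "?\<tau> permutes {1..l}" using assms by (intro permutes_swap_id) auto
  have "g \<circ> ?\<tau> = g" using assms by (auto simp: fun_eq_iff Transposition.transpose_def)
  then have "tensor_coord g h = - tensor_coord g h"
    using tensor_coord_comp_permutes[OF assms(1) \<tau>, of g] assms by (simp add: sign_swap_id)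
  then show ?thesis by simp
qed

lemma polyfun_tensor_expansion:
  assumes "polyfun n l h"
  shows "h x = (\<Sum>g\<in>PiE {1..l} (\<lambda>_. {1..n}). tensor_coord g h * (\<Prod>b\<in>{1..l}. poly (p (g b)) (x b)))"
proof -
  let ?P = "PiE {1..l} (\<lambda>_. {1..n})"
  let ?E = "PiE {1..l} (\<lambda>_. {..<n})"
  let ?c = "\<lambda>g e. \<Prod>b\<in>{1..l}. coord (g b) (monom 1 (e b))"
  obtain c where c: "h = poly_val n l c" using assms unfolding polyfun_def by blast
  have monomial: "(\<Prod>b\<in>{1..l}. x b ^ e b) = (\<Sum>g\<in>?P. ?c g e * (\<Prod>b\<in>{1..l}. poly (p (g b)) (x b)))"
    if e: "e \<in> ?E" for e
  proof -
    have "(\<Prod>b\<in>{1..l}. x b ^ e b)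
        = (\<Prod>b\<in>{1..l}. \<Sum>m\<in>{1..n}. coord m (monom 1 (e b)) * poly (p m) (x b))"
    proof (intro prod.cong refl)
      fix b assume "b \<in> {1..l}"
      then have "degree (monom (1::complex) (e b)) < n" using e by (auto simp: PiE_iff degree_monom_eq)
      then show "x b ^ e b = (\<Sum>m\<in>{1..n}. coord m (monom 1 (e b)) * poly (p m) (x b))"
        using poly_coord_expansion[of "monom 1 (e b)" "x b"] by (simp add: poly_monom)
    qed
    also have "\<dots> = (\<Sum>g\<in>?P. \<Prod>b\<in>{1..l}. coord (g b) (monom 1 (e b)) * poly (p (g b)) (x b))"
      by (rule prod_sum_PiE) auto
    finally show ?thesis by (simp add: prod.distrib)
  qed
  have coord_h: "tensor_coord g h = (\<Sum>e\<in>?E. c e * ?c g e)" for g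
  proof -
    have "h = (\<lambda>x. \<Sum>e\<in>?E. c e * (\<Prod>b\<in>{1..l}. poly (monom 1 (e b)) (x b)))"
      unfolding c by (intro ext) (simp add: poly_val_def poly_monom)
    moreover have "finite ?E" by (intro finite_PiE) auto
    ultimately show ?thesis by (simp only: tensor_coord_lincomb tensor_coord_prod)
  qed
  have "h x = (\<Sum>e\<in>?E. c e * (\<Sum>g\<in>?P. ?c g e * (\<Prod>b\<in>{1..l}. poly (p (g b)) (x b))))"
    unfolding c poly_val_def by (intro sum.cong refl) (simp only: monomial)
  also have "\<dots> = (\<Sum>g\<in>?P. (\<Sum>e\<in>?E. c e * ?c g e) * (\<Prod>b\<in>{1..l}. poly (p (g b)) (x b)))"
    by (simp add: sum_distrib_left sum_distrib_right mult_ac) (rule sum.swap)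
  finally show ?thesis by (simp add: coord_h)
qed

lemma finite_index_sets: "finite index_sets"
  unfolding index_sets_def by (rule finite_subset[of _ "Pow {1..n}"]) auto

lemma index_setsD: "M \<in> index_sets \<Longrightarrow> finite M \<and> card M = l \<and> M \<subseteq> {1..n}"
  unfolding index_sets_def using finite_subset by blast

lemma melem_in_range: "M \<in> index_sets \<Longrightarrow> b \<in> {1..l} \<Longrightarrow> melem M b \<in> {1..n}"
  using melem_in index_setsD by blast

lemma tensor_coord_wedge:
  assumes K: "K \<in> index_sets" and M: "M \<in> index_sets"
  shows "tensor_coord (melem K) (wedge p l M) = (if K = M then 1 else 0)"
proof -
  let ?S = "{\<sigma>. \<sigma> permutes {1..l}}"
  have "wedge p l M = (\<lambda>x. \<Sum>\<sigma>\<in>?S. of_int (sign \<sigma>) * (\<Prod>b\<in>{1..l}. poly (p (melem M (inv \<sigma> b))) (x b)))"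
    unfolding wedge_def by (rule ext) (rule Asym_prod)
  then have "tensor_coord (melem K) (wedge p l M) =
      (\<Sum>\<sigma>\<in>?S. of_int (sign \<sigma>) * (\<Prod>b\<in>{1..l}. coord (melem K b) (p (melem M (inv \<sigma> b)))))"
    by (simp only: tensor_coord_lincomb[OF finite_permutations[OF finite_atLeastAtMost]]
        tensor_coord_prod)
  also have "\<dots> = (\<Sum>\<sigma>\<in>?S. if \<sigma> = id \<and> K = M then 1 else 0)"
  proof (intro sum.cong refl)
    fix \<sigma> assume "\<sigma> \<in> ?S"
    then have \<sigma>: "\<sigma> permutes {1..l}" by simp
    have factor: "coord (melem K b) (p (melem M (inv \<sigma> b))) =
        (if melem K b = melem M (inv \<sigma> b) then 1 else 0)" if "b \<in> {1..l}" for b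
      using biorthogonal melem_in_range[OF K that] melem_in_range[OF M]
        permutes_in_image[OF permutes_inv[OF \<sigma>]] that
      unfolding coord_def by simp
    show "of_int (sign \<sigma>) * (\<Prod>b\<in>{1..l}. coord (melem K b) (p (melem M (inv \<sigma> b)))) =
        (if \<sigma> = id \<and> K = M then 1 else 0)"
    proof (cases "\<forall>b\<in>{1..l}. melem K b = melem M (inv \<sigma> b)")
      case True
      then have "K = M \<and> \<sigma> = id"
        using melem_eq_comp_permutes[OF _ _ _ _ \<sigma>] index_setsD[OF K] index_setsD[OF M] by blast
      then show ?thesis using factor True by simp
    next
      case False
      then obtain b where "b \<in> {1..l}" "melem K b \<noteq> melem M (inv \<sigma> b)" by blast
      then show ?thesis using factor by (auto intro!: prod_zero)
    qed
  qed
  also have "\<dots> = (if K = M then 1 else 0)"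
    by (simp add: sum.delta[OF finite_permutations[OF finite_atLeastAtMost]])
  finally show ?thesis .
qed

lemma antisymmetric_tensor_coord_eq_0:
  assumes h: "antisymmetric l h" and coords: "\<forall>K\<in>index_sets. tensor_coord (melem K) h = 0"
    and g: "g \<in> PiE {1..l} (\<lambda>_. {1..n})"
  shows "tensor_coord g h = 0"
proof (cases "inj_on g {1..l}")
  case False
  then obtain b1 b2 where "b1 \<in> {1..l}" "b2 \<in> {1..l}" "b1 \<noteq> b2" "g b1 = g b2"
    unfolding inj_on_def by blast
  then show ?thesis by (rule tensor_coord_non_inj[OF h])
next
  case True
  then obtain \<sigma> where \<sigma>: "\<sigma> permutes {1..l}" and g_eq: "\<forall>b\<in>{1..l}. g b = melem (g ` {1..l}) (\<sigma> b)"
    by (rule inj_on_eq_melem_comp_permutes)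
  have "g ` {1..l} \<in> index_sets"
    unfolding index_sets_def using g True by (auto simp: PiE_iff card_image)
  then have "tensor_coord (melem (g ` {1..l}) \<circ> \<sigma>) h = 0"
    using coords tensor_coord_comp_permutes[OF h \<sigma>] by simp
  moreover have "tensor_coord g h = tensor_coord (melem (g ` {1..l}) \<circ> \<sigma>) h"
    by (rule tensor_coord_cong) (use g_eq in \<open>simp only: o_apply\<close>)
  ultimately show ?thesis by simp
qed

lemma antisymmetric_wedge_expansion:
  assumes h: "antisymmetric l h" "polyfun n l h"
  shows "h x = (\<Sum>K\<in>index_sets. tensor_coord (melem K) h * wedge p l K x)"
proof -
  define r where "r x = h x - (\<Sum>K\<in>index_sets. tensor_coord (melem K) h * wedge p l K x)" for x
  have "antisymmetric l r"
    using h(1) antisymmetric_wedge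
    by (simp add: antisymmetric_def r_def algebra_simps sum_distrib_left)
  moreover have "polyfun n l r"
    unfolding r_def using h(2)
    by (intro polyfun_diff polyfun_lincomb finite_index_sets ballI polyfun_wedge
        degree_basis_less melem_in_range)
  moreover have "\<forall>K\<in>index_sets. tensor_coord (melem K) r = 0"
  proof
    fix K assume K: "K \<in> index_sets"
    have "tensor_coord (melem K) r = tensor_coord (melem K) h -
        (\<Sum>M\<in>index_sets. tensor_coord (melem M) h * tensor_coord (melem K) (wedge p l M))"
      unfolding r_def by (simp only: tensor_coord_diff tensor_coord_lincomb[OF finite_index_sets])
    also have "\<dots> = 0"
      using K by (simp add: tensor_coord_wedge[OF K] finite_index_sets if_distrib[of "(*) _"] cong: if_cong)
    finally show "tensor_coord (melem K) r = 0" .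
  qed
  ultimately have "r x = 0"
    using polyfun_tensor_expansion[of r x] antisymmetric_tensor_coord_eq_0 by simp
  then show ?thesis unfolding r_def by simp
qed

lemma wedge_coeffs_unique:
  assumes "\<forall>i\<in>PiE {1..l} (\<lambda>_. {1..n}). (\<Sum>M\<in>index_sets. d M * wedge p l M (s \<circ> i)) = 0"
    and K: "K \<in> index_sets"
  shows "d K = 0"
proof -
  have "0 = tensor_coord (melem K) (\<lambda>x. \<Sum>M\<in>index_sets. d M * wedge p l M x)"
    unfolding tensor_coord_def using assms(1) by simp
  also have "\<dots> = (\<Sum>M\<in>index_sets. d M * (if K = M then 1 else 0))"
    by (simp add: tensor_coord_lincomb[OF finite_index_sets] tensor_coord_wedge[OF K])
  also have "\<dots> = d K" using K by (simp add: finite_index_sets if_distrib[of "(*) _"] cong: if_cong)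
  finally show ?thesis by simp
qed

end

lemma Efun_diff: "Efun hb (x - y) = Efun hb x / Efun hb y"
proof -
  have "2 * of_real pi * \<i> * (x - y) / (2 * hb) =
      2 * of_real pi * \<i> * x / (2 * hb) - 2 * of_real pi * \<i> * y / (2 * hb)"
    by (simp add: algebra_simps diff_divide_distrib)
  then show ?thesis unfolding Efun_def by (simp add: exp_diff)
qed

lemma Efun_nonzero: "Efun hb x \<noteq> 0"
  unfolding Efun_def by simp

lemma Efun_surjective:
  assumes "hb \<noteq> 0" "y \<noteq> 0"
  shows "\<exists>t. Efun hb t = y"
proof
  have "2 * of_real pi * \<i> * (2 * hb * Ln y / (2 * of_real pi * \<i>)) / (2 * hb) = Ln y"
    using assms by (simp add: field_simps)
  then show "Efun hb (2 * hb * Ln y / (2 * of_real pi * \<i>)) = y"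
    unfolding Efun_def using assms by simp
qed

lemma generic_Efun_add_nonzero:
  assumes hb: "hb \<noteq> 0" and gen: "generic hb n z" and j: "j \<in> {1..n}" and k: "k \<in> {1..n}"
  shows "Efun hb (z j) + Efun hb (z k) \<noteq> 0"
proof (cases "j = k")
  case True
  then show ?thesis using Efun_nonzero[of hb "z j"] by simp
next
  case False
  show ?thesis
  proof
    assume "Efun hb (z j) + Efun hb (z k) = 0"
    then have "exp (2 * of_real pi * \<i> * z j / (2 * hb)) =
        exp (2 * of_real pi * \<i> * z k / (2 * hb) + of_real pi * \<i>)"
      unfolding Efun_def by (simp add: exp_add add_eq_0_iff)
    then obtain m :: int where m: "2 * of_real pi * \<i> * z j / (2 * hb) =
        2 * of_real pi * \<i> * z k / (2 * hb) + of_real pi * \<i> + of_int (2 * m) * pi * \<i>"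
      unfolding exp_eq by blast
    have "(of_real pi * \<i>) * (z j / hb) = (of_real pi * \<i>) * (z k / hb + 1 + of_int (2 * m))"
      using m by (simp add: algebra_simps)
    moreover have "(of_real pi :: complex) * \<i> \<noteq> 0" by simp
    ultimately have "z j / hb = z k / hb + 1 + of_int (2 * m)" using mult_left_cancel by blast
    then have "z j - z k + hb = of_int (m + 1) * (2 * hb)"
      using hb by (simp add: field_simps)
    then show False using gen j k False unfolding generic_def by blast
  qed
qed

definition denominator :: "complex \<Rightarrow> nat \<Rightarrow> nat \<Rightarrow> (nat \<Rightarrow> complex) \<Rightarrow> (nat \<Rightarrow> complex) \<Rightarrow> complex" where
  "denominator hb n l z t = (\<Prod>m\<in>{1..n}. \<Prod>a\<in>{1..l}. 1 - Efun hb (t a - z m))"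

lemma denominator_nonzero: "t \<in> regular_pts hb n l z \<Longrightarrow> denominator hb n l z t \<noteq> 0"
  unfolding denominator_def regular_pts_def by auto

lemma denominator_comp_permutes:
  assumes \<sigma>: "\<sigma> permutes {1..l}"
  shows "denominator hb n l z (t \<circ> \<sigma>) = denominator hb n l z t"
  unfolding denominator_def
proof (rule prod.cong[OF refl])
  fix m assume "m \<in> {1..n}"
  show "(\<Prod>a\<in>{1..l}. 1 - Efun hb ((t \<circ> \<sigma>) a - z m)) = (\<Prod>a\<in>{1..l}. 1 - Efun hb (t a - z m))"
    using prod.permute[OF \<sigma>, of "\<lambda>a. 1 - Efun hb (t a - z m)"] by (simp add: o_def)
qed

lemma regular_pts_comp_permutes:
  "t \<in> regular_pts hb n l z \<Longrightarrow> \<sigma> permutes {1..l} \<Longrightarrow> t \<circ> \<sigma> \<in> regular_pts hb n l z"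
  unfolding regular_pts_def using permutes_in_image by fastforce

lemma G_factor_times_denominator:
  fixes u :: "nat \<Rightarrow> 'a::field"
  assumes m: "m \<in> {1..n}" and u: "\<forall>j\<in>{1..n}. u j \<noteq> 1"
  shows "1 / (u m - 1) * (\<Prod>j\<in>{1..<m}. (u j + 1) / (u j - 1)) * (\<Prod>j\<in>{1..n}. 1 - u j)
       = - ((\<Prod>j\<in>{1..<m}. -1 - u j) * (\<Prod>j\<in>{m<..n}. 1 - u j))"
proof -
  have "{1..n} = {1..<m} \<union> insert m {m<..n}" using m by auto
  then have "(\<Prod>j\<in>{1..n}. 1 - u j) = (\<Prod>j\<in>{1..<m}. 1 - u j) * (\<Prod>j\<in>insert m {m<..n}. 1 - u j)"
    by (simp only:) (rule prod.union_disjoint; auto)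
  also have "(\<Prod>j\<in>insert m {m<..n}. 1 - u j) = (1 - u m) * (\<Prod>j\<in>{m<..n}. 1 - u j)"
    by simp
  finally have "(\<Prod>j\<in>{1..n}. 1 - u j) = (\<Prod>j\<in>{1..<m}. 1 - u j) * ((1 - u m) * (\<Prod>j\<in>{m<..n}. 1 - u j))" .
  moreover have "(\<Prod>j\<in>{1..<m}. (u j + 1) / (u j - 1)) * (\<Prod>j\<in>{1..<m}. 1 - u j) = (\<Prod>j\<in>{1..<m}. -1 - u j)"
    unfolding prod.distrib[symmetric] using m u
    by (intro prod.cong refl) (auto simp: field_simps)
  moreover have "1 / (u m - 1) * (1 - u m) = -1"
    using m u by (auto simp: field_simps)
  ultimately show ?thesis by algebra
qed

lemma G_fun_times_denominator:
  assumes M: "\<forall>b\<in>{1..l}. melem M b \<in> {1..n}" and t: "t \<in> regular_pts hb n l z"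
  shows "G_fun hb l z M t * denominator hb n l z t =
    (\<Prod>b\<in>{1..l}. poly (wpoly (\<lambda>m. Efun hb (z m)) n (melem M b)) (Efun hb (t b)))"
proof -
  have "denominator hb n l z t = (\<Prod>b\<in>{1..l}. \<Prod>m\<in>{1..n}. 1 - Efun hb (t b - z m))"
    unfolding denominator_def by (rule prod.swap)
  then have "G_fun hb l z M t * denominator hb n l z t = (\<Prod>b\<in>{1..l}.
      1 / (Efun hb (t b - z (melem M b)) - 1) *
      (\<Prod>j\<in>{1..<melem M b}. (Efun hb (t b - z j) + 1) / (Efun hb (t b - z j) - 1)) *
      (\<Prod>m\<in>{1..n}. 1 - Efun hb (t b - z m)))"
    by (simp only: G_fun_def prod.distrib[symmetric])
  also have "\<dots> = (\<Prod>b\<in>{1..l}. poly (wpoly (\<lambda>m. Efun hb (z m)) n (melem M b)) (Efun hb (t b)))"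
  proof (rule prod.cong[OF refl])
    fix b assume b: "b \<in> {1..l}"
    have "\<forall>j\<in>{1..n}. Efun hb (t b - z j) \<noteq> 1" using t b unfolding regular_pts_def by blast
    from G_factor_times_denominator[OF M[rule_format, OF b] this]
    show "1 / (Efun hb (t b - z (melem M b)) - 1) *
        (\<Prod>j\<in>{1..<melem M b}. (Efun hb (t b - z j) + 1) / (Efun hb (t b - z j) - 1)) *
        (\<Prod>m\<in>{1..n}. 1 - Efun hb (t b - z m)) =
        poly (wpoly (\<lambda>m. Efun hb (z m)) n (melem M b)) (Efun hb (t b))"
      unfolding poly_wpoly Efun_diff[symmetric] .
  qed
  finally show ?thesis .
qed

lemma W_fun_times_denominator:
  assumes M: "\<forall>b\<in>{1..l}. melem M b \<in> {1..n}" and t: "t \<in> regular_pts hb n l z"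
  shows "W_fun hb l z M t * denominator hb n l z t =
    wedge (wpoly (\<lambda>m. Efun hb (z m)) n) l M (\<lambda>b. Efun hb (t b))"
proof -
  have "W_fun hb l z M t * denominator hb n l z t = (\<Sum>\<sigma> | \<sigma> permutes {1..l}.
      of_int (sign \<sigma>) * (G_fun hb l z M (t \<circ> \<sigma>) * denominator hb n l z (t \<circ> \<sigma>)))"
    unfolding W_fun_def Asym_def sum_distrib_right
    by (intro sum.cong refl) (simp add: denominator_comp_permutes)
  also have "\<dots> = wedge (wpoly (\<lambda>m. Efun hb (z m)) n) l M (\<lambda>b. Efun hb (t b))"
    unfolding wedge_def Asym_def
    by (intro sum.cong refl) (simp add: G_fun_times_denominator[OF M regular_pts_comp_permutes[OF t]])
  finally show ?thesis .
qed

lemma W_fun_in_Fspace: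
  assumes "M \<subseteq> {1..n}" "card M = l"
  shows "W_fun hb l z M \<in> Fspace hb n l z"
proof -
  have "finite M" using assms(1) finite_subset by blast
  then have M: "\<forall>b\<in>{1..l}. melem M b \<in> {1..n}"
    using assms melem_in[of M l] by blast
  then have "polyfun n l (wedge (wpoly (\<lambda>m. Efun hb (z m)) n) l M)"
    by (intro polyfun_wedge degree_wpoly_less) auto
  then obtain c where c: "wedge (wpoly (\<lambda>m. Efun hb (z m)) n) l M = poly_val n l c"
    unfolding polyfun_def by blast
  then have "antisym_poly n l c"
    using antisymmetric_wedge unfolding antisym_poly_iff by metis
  moreover have "\<forall>t\<in>regular_pts hb n l z.
      W_fun hb l z M t * denominator hb n l z t = poly_val n l c (\<lambda>a. Efun hb (t a))"
    using W_fun_times_denominator[OF M] c by simp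
  ultimately show ?thesis unfolding Fspace_def denominator_def by blast
qed

lemma sampled_wpoly_basis_off_poles:
  assumes "hb \<noteq> 0" "generic hb n z"
  obtains s \<mu> where "sampled_basis n (wpoly (\<lambda>m. Efun hb (z m)) n) s \<mu>"
    and "\<And>j. s j \<noteq> 0" and "\<And>j m. m \<in> {1..n} \<Longrightarrow> s j \<noteq> Efun hb (z m)"
proof -
  let ?A = "insert 0 ((\<lambda>m. Efun hb (z m)) ` {1..n})"
  have "infinite (UNIV - ?A)" by (simp add: infinite_UNIV_char_0)
  then obtain s :: "nat \<Rightarrow> complex" where "inj s" "range s \<subseteq> UNIV - ?A"
    using infinite_countable_subset by blast
  have "\<forall>j\<in>{1..n}. \<forall>k\<in>{1..n}. Efun hb (z j) + Efun hb (z k) \<noteq> 0"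
    using generic_Efun_add_nonzero[OF assms] by blast
  moreover have "inj_on s {1..n}" using \<open>inj s\<close> by (rule inj_on_subset) simp
  ultimately obtain \<mu> where "sampled_basis n (wpoly (\<lambda>m. Efun hb (z m)) n) s \<mu>"
    by (rule wpoly_sampled_basis)
  moreover have "s j \<noteq> 0" "m \<in> {1..n} \<Longrightarrow> s j \<noteq> Efun hb (z m)" for j m
    using \<open>range s \<subseteq> UNIV - ?A\<close> by blast+
  ultimately show ?thesis using that by blast
qed

lemma Fspace_expansion:
  assumes "hb \<noteq> 0" "generic hb n z" and F: "F \<in> Fspace hb n l z"
  obtains c where "\<forall>M. \<not> (M \<subseteq> {1..n} \<and> card M = l) \<longrightarrow> c M = 0"
    and "\<forall>t\<in>regular_pts hb n l z.
      F t = (\<Sum>M | M \<subseteq> {1..n} \<and> card M = l. c M * W_fun hb l z M t)"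
proof -
  obtain s \<mu> where "sampled_basis n (wpoly (\<lambda>m. Efun hb (z m)) n) s \<mu>"
    by (rule sampled_wpoly_basis_off_poles[OF assms(1,2)])
  then interpret sampled_tensor_basis n "wpoly (\<lambda>m. Efun hb (z m)) n" s \<mu> l
    by (simp add: sampled_tensor_basis_def)
  obtain c where anti: "antisym_poly n l c" and Fc: "\<forall>t\<in>regular_pts hb n l z.
      F t * denominator hb n l z t = poly_val n l c (\<lambda>a. Efun hb (t a))"
    using F unfolding Fspace_def denominator_def by blast
  define \<kappa> where "\<kappa> M = (if M \<in> index_sets then tensor_coord (melem M) (poly_val n l c) else 0)" for M
  have expansion: "poly_val n l c x = (\<Sum>M\<in>index_sets. \<kappa> M * wedge (wpoly (\<lambda>m. Efun hb (z m)) n) l M x)"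
    for x
  proof -
    have "poly_val n l c x = (\<Sum>M\<in>index_sets.
        tensor_coord (melem M) (poly_val n l c) * wedge (wpoly (\<lambda>m. Efun hb (z m)) n) l M x)"
      using anti by (intro antisymmetric_wedge_expansion) (auto simp: antisym_poly_iff polyfun_def)
    then show ?thesis unfolding \<kappa>_def by (simp cong: sum.cong)
  qed
  have "F t = (\<Sum>M\<in>index_sets. \<kappa> M * W_fun hb l z M t)" if t: "t \<in> regular_pts hb n l z" for t
  proof -
    have "F t * denominator hb n l z t = poly_val n l c (\<lambda>a. Efun hb (t a))" using Fc t by blast
    also have "\<dots> = (\<Sum>M\<in>index_sets. \<kappa> M * wedge (wpoly (\<lambda>m. Efun hb (z m)) n) l M (\<lambda>a. Efun hb (t a)))"
      by (rule expansion)
    also have "\<dots> = (\<Sum>M\<in>index_sets. \<kappa> M * W_fun hb l z M t) * denominator hb n l z t"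
      using W_fun_times_denominator[OF _ t] melem_in_range
      by (simp add: sum_distrib_right mult.assoc)
    finally show ?thesis using denominator_nonzero[OF t] by simp
  qed
  then show ?thesis by (intro that[of \<kappa>]) (simp_all add: index_sets_def \<kappa>_def)
qed

lemma W_fun_linear_independent:
  assumes "hb \<noteq> 0" "generic hb n z"
    and vanish: "\<forall>t\<in>regular_pts hb n l z.
      (\<Sum>M | M \<subseteq> {1..n} \<and> card M = l. d M * W_fun hb l z M t) = 0"
    and "K \<subseteq> {1..n}" "card K = l"
  shows "d K = 0"
proof -
  obtain s \<mu> where "sampled_basis n (wpoly (\<lambda>m. Efun hb (z m)) n) s \<mu>"
    and s0: "\<And>j. s j \<noteq> 0" and s_pole: "\<And>j m. m \<in> {1..n} \<Longrightarrow> s j \<noteq> Efun hb (z m)"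
    using sampled_wpoly_basis_off_poles[OF assms(1,2)] by blast
  then interpret sampled_tensor_basis n "wpoly (\<lambda>m. Efun hb (z m)) n" s \<mu> l
    by (simp add: sampled_tensor_basis_def)
  have grid: "(\<Sum>M\<in>index_sets. d M * wedge (wpoly (\<lambda>m. Efun hb (z m)) n) l M (s \<circ> i)) = 0" for i
  proof -
    have "\<forall>b. \<exists>x. Efun hb x = s (i b)" using Efun_surjective[OF assms(1) s0] by blast
    then obtain t where t: "\<And>b. Efun hb (t b) = s (i b)" by metis
    have "Efun hb (t b - z m) \<noteq> 1" if "m \<in> {1..n}" for b m
      using t[of b] s_pole[OF that] by (simp add: Efun_diff Efun_nonzero)
    then have reg: "t \<in> regular_pts hb n l z" unfolding regular_pts_def by blast
    have "s \<circ> i = (\<lambda>b. Efun hb (t b))" by (simp add: fun_eq_iff t)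
    then have "(\<Sum>M\<in>index_sets. d M * wedge (wpoly (\<lambda>m. Efun hb (z m)) n) l M (s \<circ> i)) =
        (\<Sum>M\<in>index_sets. d M * W_fun hb l z M t) * denominator hb n l z t"
      using W_fun_times_denominator[OF _ reg] melem_in_range
      by (simp add: sum_distrib_right mult.assoc)
    also have "(\<Sum>M\<in>index_sets. d M * W_fun hb l z M t) = 0"
      using vanish reg unfolding index_sets_def by blast
    finally show ?thesis by (simp only: mult_zero_left)
  qed
  have "K \<in> index_sets" using assms(4,5) by (simp add: index_sets_def)
  then show ?thesis using grid by (intro wedge_coeffs_unique) auto
qed

lemma W_fun_coeffs_unique:
  assumes "hb \<noteq> 0" "generic hb n z"
    and "\<forall>M. \<not> (M \<subseteq> {1..n} \<and> card M = l) \<longrightarrow> c M = 0"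
    and "\<forall>M. \<not> (M \<subseteq> {1..n} \<and> card M = l) \<longrightarrow> c' M = 0"
    and "\<forall>t\<in>regular_pts hb n l z. (\<Sum>M | M \<subseteq> {1..n} \<and> card M = l. c M * W_fun hb l z M t) =
      (\<Sum>M | M \<subseteq> {1..n} \<and> card M = l. c' M * W_fun hb l z M t)"
  shows "c = c'"
proof
  fix M
  have "\<forall>t\<in>regular_pts hb n l z.
      (\<Sum>M | M \<subseteq> {1..n} \<and> card M = l. (c M - c' M) * W_fun hb l z M t) = 0"
    using assms(5) by (simp add: left_diff_distrib sum_subtractf)
  then have "c M - c' M = 0" if "M \<subseteq> {1..n}" "card M = l"
    using W_fun_linear_independent[OF assms(1,2), where d = "\<lambda>M. c M - c' M"] that by simp
  moreover have "c M = 0" "c' M = 0" if "\<not> (M \<subseteq> {1..n} \<and> card M = l)"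
    using assms(3,4) that by blast+
  ultimately show "c M = c' M" by force
qed

theorem proposition5p1:
  fixes hb :: complex and n l :: nat and z :: "nat \<Rightarrow> complex"
  assumes "hb \<noteq> 0" and "l \<le> n" and "generic hb n z"
  shows "(\<forall>M. M \<subseteq> {1..n} \<and> card M = l \<longrightarrow> W_fun hb l z M \<in> Fspace hb n l z)
    \<and> (\<forall>F\<in>Fspace hb n l z. \<exists>!c :: nat set \<Rightarrow> complex.
         (\<forall>M. \<not> (M \<subseteq> {1..n} \<and> card M = l) \<longrightarrow> c M = 0) \<and>
         (\<forall>t\<in>regular_pts hb n l z.
            F t = (\<Sum>M | M \<subseteq> {1..n} \<and> card M = l. c M * W_fun hb l z M t)))"
proof -
  have "\<exists>!c. (\<forall>M. \<not> (M \<subseteq> {1..n} \<and> card M = l) \<longrightarrow> c M = 0) \<and>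
      (\<forall>t\<in>regular_pts hb n l z. F t = (\<Sum>M | M \<subseteq> {1..n} \<and> card M = l. c M * W_fun hb l z M t))"
    if F: "F \<in> Fspace hb n l z" for F
  proof -
    obtain c where c: "\<forall>M. \<not> (M \<subseteq> {1..n} \<and> card M = l) \<longrightarrow> c M = 0"
      and F_eq: "\<forall>t\<in>regular_pts hb n l z. F t = (\<Sum>M | M \<subseteq> {1..n} \<and> card M = l. c M * W_fun hb l z M t)"
      by (rule Fspace_expansion[OF assms(1,3) F])
    show ?thesis
    proof (rule ex1I[of _ c])
      fix c' assume c': "(\<forall>M. \<not> (M \<subseteq> {1..n} \<and> card M = l) \<longrightarrow> c' M = 0) \<and>
        (\<forall>t\<in>regular_pts hb n l z. F t = (\<Sum>M | M \<subseteq> {1..n} \<and> card M = l. c' M * W_fun hb l z M t))"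
      show "c' = c"
      proof (rule W_fun_coeffs_unique[OF assms(1,3)])
        show "\<forall>t\<in>regular_pts hb n l z. (\<Sum>M | M \<subseteq> {1..n} \<and> card M = l. c' M * W_fun hb l z M t) =
            (\<Sum>M | M \<subseteq> {1..n} \<and> card M = l. c M * W_fun hb l z M t)"
          using c' F_eq by simp
      qed (use c c' in blast)+
    qed (use c F_eq in blast)
  qed
  then show ?thesis by (simp add: W_fun_in_Fspace)
qed

end
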